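(* Let $k\ge1$, let $(T,o)$ be a valid finite rooted tree, and let $D$ be a signed incidence matrix of $T$, i.e. the real $V(T)\times U(T)$ matrix with $D_{v,u}\in\{1,-1\}$ if $vu$ is an edge of $T$ and $D_{v,u}=0$ otherwise. Let $V(T)=K\uplus J$ be a partition with $m(K,T)>0$ and let $v_0\in J$. Then there exists $\varphi\in\mathbb R^{V(T)}$ such that (i) $\varphi^TD=0$, (ii) $\varphi(v_0)=1$, and (iii) \[\sum_{v\in J}\varphi(v)^2=\frac{m(K,T)}{m(K,T)-m(K\cup\{v_0\},T)}.\]
   Context: Trees. For a finite rooted tree $(T,o)$, the height of a vertex is its distance from $o$ and the height of $T$ is the maximal height of a vertex. Vertices of even (odd) height are called even (odd); $V(T)$ and $U(T)$ denote the sets of even and odd vertices. $(T,o)$ is valid if its height is even and every odd vertex has degree exactly $k+1$ in $T$. For $K\subset V(T)$, $m(K,T)$ is the number of matchings of $T$ in which every vertex of $K\cup U(T)$ is saturated (the denominator in (iii) is positive). *)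

theory Defs
  imports Complex_Main
begin

definition simple_graph :: "'a set \<Rightarrow> 'a set set \<Rightarrow> bool" where
  "simple_graph Vs E \<longleftrightarrow> finite Vs \<and>
     (\<forall>e\<in>E. \<exists>x y. x \<noteq> y \<and> x \<in> Vs \<and> y \<in> Vs \<and> e = {x, y})"

definition is_walk :: "'a set set \<Rightarrow> 'a list \<Rightarrow> bool" where
  "is_walk E p \<longleftrightarrow> p \<noteq> [] \<and> (\<forall>i. Suc i < length p \<longrightarrow> {p ! i, p ! Suc i} \<in> E)"

definition connected_graph :: "'a set \<Rightarrow> 'a set set \<Rightarrow> bool" where
  "connected_graph Vs E \<longleftrightarrow>
     (\<forall>x\<in>Vs. \<forall>y\<in>Vs. \<exists>p. is_walk E p \<and> hd p = x \<and> last p = y)"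

definition has_cycle :: "'a set set \<Rightarrow> bool" where
  "has_cycle E \<longleftrightarrow> (\<exists>p. length p \<ge> 3 \<and> distinct p \<and> is_walk E p \<and> {last p, hd p} \<in> E)"

definition is_tree :: "'a set \<Rightarrow> 'a set set \<Rightarrow> bool" where
  "is_tree Vs E \<longleftrightarrow> simple_graph Vs E \<and> Vs \<noteq> {} \<and> connected_graph Vs E \<and> \<not> has_cycle E"

definition gdist :: "'a set set \<Rightarrow> 'a \<Rightarrow> 'a \<Rightarrow> nat" where
  "gdist E x y = (LEAST n. \<exists>p. is_walk E p \<and> hd p = x \<and> last p = y \<and> length p = Suc n)"

definition even_verts :: "'a set \<Rightarrow> 'a set set \<Rightarrow> 'a \<Rightarrow> 'a set" where
  "even_verts Vs E r = {v \<in> Vs. even (gdist E r v)}"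

definition odd_verts :: "'a set \<Rightarrow> 'a set set \<Rightarrow> 'a \<Rightarrow> 'a set" where
  "odd_verts Vs E r = {v \<in> Vs. odd (gdist E r v)}"

definition tree_height :: "'a set \<Rightarrow> 'a set set \<Rightarrow> 'a \<Rightarrow> nat" where
  "tree_height Vs E r = Max (gdist E r ` Vs)"

definition degree :: "'a set set \<Rightarrow> 'a \<Rightarrow> nat" where
  "degree E v = card {e \<in> E. v \<in> e}"

definition valid_tree :: "nat \<Rightarrow> 'a set \<Rightarrow> 'a set set \<Rightarrow> 'a \<Rightarrow> bool" where
  "valid_tree k Vs E r \<longleftrightarrow> is_tree Vs E \<and> r \<in> Vs \<and> even (tree_height Vs E r) \<and>
     (\<forall>u\<in>odd_verts Vs E r. degree E u = k + 1)"

definition is_matching :: "'a set set \<Rightarrow> 'a set set \<Rightarrow> bool" where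
  "is_matching E M \<longleftrightarrow> M \<subseteq> E \<and> (\<forall>e1\<in>M. \<forall>e2\<in>M. e1 \<noteq> e2 \<longrightarrow> e1 \<inter> e2 = {})"

definition mcount :: "'a set \<Rightarrow> 'a set set \<Rightarrow> 'a \<Rightarrow> 'a set \<Rightarrow> nat" where
  "mcount Vs E r K = card {M. is_matching E M \<and> K \<union> odd_verts Vs E r \<subseteq> \<Union>M}"

definition signed_incidence :: "'a set \<Rightarrow> 'a set set \<Rightarrow> 'a \<Rightarrow> ('a \<Rightarrow> 'a \<Rightarrow> real) \<Rightarrow> bool" where
  "signed_incidence Vs E r D \<longleftrightarrow>
     (\<forall>v\<in>even_verts Vs E r. \<forall>u\<in>odd_verts Vs E r.
        (if {v, u} \<in> E then D v u = 1 \<or> D v u = -1 else D v u = 0))"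

end

(*
  Generalise: give the vertices of J positive weights a, replace the sum of squares by
  the energy sum of a(v) phi(v)^2 over J, and the counts by N(Z), the sum over all
  matchings saturating K and the odd vertices and avoiding Z of the product of the
  weights of the vertices of J they leave exposed.  With unit weights N({}) = m(K,T) and
  N({v0}) = m(K,T) - m(K + v0,T), and the claim becomes energy = a(v0) N({}) / N({v0}),
  an effective resistance.  This only needs a forest, bipartite between V and U, in
  which every vertex of U has degree at least two, and is proved by induction on the
  number of vertices.  If v0 is isolated, phi is the indicator of v0.  Otherwise, near
  the end of a longest path from v0 there is a vertex u of U all of whose neighbours but
  one are leaves other than v0.  A leaf in K is matched to u in every matching and is
  deleted together with u; two leaves in J at u merge into one leaf of harmonic weight,
  like resistors in parallel; a leaf in J at a u of degree two is contracted into the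
  other neighbour of u, adding its weight there, like resistors in series.  Each
  reduction preserves the ratio, and a potential of the reduced forest extends by
  solving the balance equation at u.
*)

theory Submission
  imports Defs
begin

subsection \<open>Walks and graph distance\<close>

lemma is_walk_append:
  assumes "is_walk E p" "is_walk E q" "{last p, hd q} \<in> E"
  shows "is_walk E (p @ q)"
  unfolding is_walk_def
proof (intro conjI allI impI)
  show "p @ q \<noteq> []" using assms(1) by (simp add: is_walk_def)
  fix i assume i: "Suc i < length (p @ q)"
  have "p \<noteq> []" "q \<noteq> []" using assms by (auto simp: is_walk_def)
  consider "Suc i < length p" | "Suc i = length p" | "Suc i > length p" by linarith
  then show "{(p @ q) ! i, (p @ q) ! Suc i} \<in> E"
  proof cases
    case 1
    then show ?thesis using assms(1) by (simp add: is_walk_def nth_append)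
  next
    case 2
    then have "i = length p - 1" by simp
    then have "(p @ q) ! i = last p" "(p @ q) ! Suc i = hd q"
      using 2 \<open>p \<noteq> []\<close> \<open>q \<noteq> []\<close> by (auto simp: nth_append last_conv_nth hd_conv_nth)
    then show ?thesis using assms(3) by simp
  next
    case 3
    then show ?thesis using assms(2) i by (auto simp: is_walk_def nth_append Suc_diff_le)
  qed
qed

lemma is_walk_snoc: "is_walk E p \<Longrightarrow> {last p, y} \<in> E \<Longrightarrow> is_walk E (p @ [y])"
  using is_walk_append[of E p "[y]"] by (simp add: is_walk_def)

lemma is_walk_drop: "is_walk E p \<Longrightarrow> i < length p \<Longrightarrow> is_walk E (drop i p)"
  unfolding is_walk_def by (auto simp: add.commute[of i] simp del: add_Suc_right)

lemma is_walk_take: "is_walk E p \<Longrightarrow> 0 < j \<Longrightarrow> is_walk E (take j p)"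
  unfolding is_walk_def by auto

lemma is_walk_rev:
  assumes "is_walk E p" shows "is_walk E (rev p)"
  unfolding is_walk_def
proof (intro conjI allI impI)
  show "rev p \<noteq> []" using assms by (simp add: is_walk_def)
  fix i assume i: "Suc i < length (rev p)"
  define j where "j = length p - Suc (Suc i)"
  have "rev p ! i = p ! Suc j" "rev p ! Suc i = p ! j" "Suc j < length p"
    using i by (auto simp: rev_nth j_def Suc_diff_Suc)
  then show "{rev p ! i, rev p ! Suc i} \<in> E"
    using assms unfolding is_walk_def by (metis insert_commute)
qed

lemma has_cycle_mono: "has_cycle E' \<Longrightarrow> E' \<subseteq> E \<Longrightarrow> has_cycle E"
  unfolding has_cycle_def is_walk_def by blast

lemma simple_graph_edgeD:
  assumes "simple_graph Vs E" "{x, y} \<in> E"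
  shows "x \<noteq> y" "x \<in> Vs" "y \<in> Vs"
  using assms unfolding simple_graph_def by (auto simp: doubleton_eq_iff)

lemma simple_graph_edge_through:
  assumes "simple_graph Vs E" "e \<in> E" "x \<in> e"
  obtains y where "e = {x, y}"
  using assms unfolding simple_graph_def by (metis insert_commute insertE singletonD)

lemma simple_graph_finite_edges: "simple_graph Vs E \<Longrightarrow> finite E"
  unfolding simple_graph_def by (rule finite_subset[of _ "Pow Vs"]) auto

lemma gdist_le_walk:
  assumes "is_walk E p" "hd p = x" "last p = y"
  shows "Suc (gdist E x y) \<le> length p"
proof -
  have len: "length p = Suc (length p - 1)" using assms(1) by (simp add: is_walk_def)
  then have "gdist E x y \<le> length p - 1"
    unfolding gdist_def using assms by (intro Least_le) metis
  then show ?thesis using len by linarith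
qed

lemma shortest_walk_exists:
  assumes "is_walk E p" "hd p = x" "last p = y"
  obtains q where "is_walk E q" "hd q = x" "last q = y" "length q = Suc (gdist E x y)"
proof -
  have "\<exists>n q. is_walk E q \<and> hd q = x \<and> last q = y \<and> length q = Suc n"
    using assms by (metis Suc_pred is_walk_def length_greater_0_conv)
  then have "\<exists>q. is_walk E q \<and> hd q = x \<and> last q = y \<and> length q = Suc (gdist E x y)"
    unfolding gdist_def by (rule LeastI_ex)
  then show ?thesis using that by blast
qed

lemma gdist_shortest_walk_nth:
  assumes p: "is_walk E p" "hd p = r" "length p = Suc (gdist E r (last p))" and i: "i < length p"
  shows "gdist E r (p ! i) = i"
proof -
  have pre: "is_walk E (take (Suc i) p)" "hd (take (Suc i) p) = r" "last (take (Suc i) p) = p ! i"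
    using is_walk_take[OF p(1), of "Suc i"] p(2) by (simp, simp, simp add: take_Suc_conv_app_nth[OF i])
  then have le: "gdist E r (p ! i) \<le> i" using gdist_le_walk[OF pre] i by simp
  obtain q where q: "is_walk E q" "hd q = r" "last q = p ! i" "length q = Suc (gdist E r (p ! i))"
    using shortest_walk_exists[OF pre] .
  show ?thesis
  proof (cases "Suc i < length p")
    case True
    have rest: "is_walk E (drop (Suc i) p)" "hd (drop (Suc i) p) = p ! Suc i"
      "{p ! i, p ! Suc i} \<in> E"
      using is_walk_drop[OF p(1) True] True p(1) by (auto simp: hd_drop_conv_nth is_walk_def)
    have w: "is_walk E (q @ drop (Suc i) p)"
      using is_walk_append[OF q(1) rest(1)] rest(2,3) q(3) by simp
    have "hd (q @ drop (Suc i) p) = r" "last (q @ drop (Suc i) p) = last p"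
      using q(1,2) True by (auto simp: is_walk_def last_drop)
    then have "Suc (gdist E r (last p)) \<le> length (q @ drop (Suc i) p)"
      using gdist_le_walk[OF w] by simp
    then show ?thesis using le q(4) p(3) True by simp
  next
    case False
    then have "i = length p - 1" using i by simp
    moreover have "p \<noteq> []" using i by auto
    ultimately have "p ! i = last p" "i = length p - 1" by (simp_all add: last_conv_nth)
    then show ?thesis using p(3) by simp
  qed
qed

lemma shortest_walk_distinct:
  assumes "is_walk E p" "hd p = r" "length p = Suc (gdist E r (last p))"
  shows "distinct p"
  unfolding distinct_conv_nth using gdist_shortest_walk_nth[OF assms] by metis

lemma gdist_edge_le:
  assumes "is_walk E p" "hd p = r" "last p = x" "{x, y} \<in> E"
  shows "gdist E r y \<le> Suc (gdist E r x)"
proof -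
  obtain q where q: "is_walk E q" "hd q = r" "last q = x" "length q = Suc (gdist E r x)"
    using shortest_walk_exists[OF assms(1-3)] .
  have "is_walk E (q @ [y])" using is_walk_snoc[OF q(1)] q(3) assms(4) by simp
  moreover have "hd (q @ [y]) = r" using q by (cases q) (auto simp: is_walk_def)
  ultimately show ?thesis using gdist_le_walk[of E "q @ [y]" r y] q by simp
qed

text \<open>The cycle runs along P from the last index where P and Q agree, then back along Q;
  the level condition keeps the two halves apart.\<close>

lemma has_cycle_if_walks_diverge:
  assumes P: "is_walk E P" "distinct P" "length P = Suc n"
    and Q: "is_walk E Q" "distinct Q" "length Q = Suc n"
    and start: "P ! 0 = Q ! 0" and ends: "P ! n \<noteq> Q ! n" "{P ! n, Q ! n} \<in> E"
    and level: "\<And>i j. i < Suc n \<Longrightarrow> j < Suc n \<Longrightarrow> P ! i = Q ! j \<Longrightarrow> i = j"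
  shows "has_cycle E"
proof -
  define A where "A = {i. i \<le> n \<and> P ! i = Q ! i}"
  define j where "j = Max A"
  have "finite A" "0 \<in> A" unfolding A_def using start by auto
  then have jA: "j \<in> A" and jmax: "\<And>i. i \<in> A \<Longrightarrow> i \<le> j"
    unfolding j_def by (auto intro: Max_in)
  have jn: "j < n" using jA ends(1) unfolding A_def by (cases "j = n") auto
  define C where "C = drop j P @ rev (drop (Suc j) Q)"
  have disj: "set (drop j P) \<inter> set (drop (Suc j) Q) = {}"
  proof (rule ccontr)
    assume "set (drop j P) \<inter> set (drop (Suc j) Q) \<noteq> {}"
    then obtain z where "z \<in> set (drop j P)" "z \<in> set (drop (Suc j) Q)" by blast
    then obtain a b where "a < length (drop j P)" "z = drop j P ! a"
      "b < length (drop (Suc j) Q)" "z = drop (Suc j) Q ! b"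
      by (metis in_set_conv_nth)
    then have "j + a < Suc n" "Suc j + b < Suc n" "P ! (j + a) = Q ! (Suc j + b)"
      using P(3) Q(3) by auto
    then have "Suc j + b \<in> A" using level[of "j + a" "Suc j + b"] unfolding A_def by simp
    then show False using jmax by fastforce
  qed
  have "distinct C" unfolding C_def using disj P(2) Q(2) by simp
  moreover have "is_walk E C"
    unfolding C_def using jn P Q ends(2)
    by (intro is_walk_append is_walk_rev is_walk_drop) (auto simp: last_drop hd_rev last_conv_nth)
  moreover have "{last C, hd C} \<in> E"
  proof -
    have "{Q ! j, Q ! Suc j} \<in> E" using Q(1,3) jn by (simp add: is_walk_def)
    moreover have "hd C = Q ! j" "last C = Q ! Suc j"
      using jA jn P(3) Q(3) unfolding C_def A_def by (auto simp: hd_drop_conv_nth last_rev)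
    ultimately show ?thesis by (simp add: insert_commute)
  qed
  moreover have "3 \<le> length C" unfolding C_def using P(3) Q(3) jn by simp
  ultimately show ?thesis unfolding has_cycle_def by blast
qed

lemma has_cycle_if_gdist_eq:
  assumes wx: "is_walk E p" "hd p = r" "last p = x" and wy: "is_walk E p'" "hd p' = r" "last p' = y"
    and xy: "{x, y} \<in> E" "x \<noteq> y" and eq: "gdist E r x = gdist E r y"
  shows "has_cycle E"
proof -
  define n where "n = gdist E r x"
  obtain P where P: "is_walk E P" "hd P = r" "last P = x" "length P = Suc n"
    using shortest_walk_exists[OF wx] n_def by metis
  obtain Q where Q: "is_walk E Q" "hd Q = r" "last Q = y" "length Q = Suc n"
    using shortest_walk_exists[OF wy] eq n_def by metis
  have "P ! i = Q ! j \<Longrightarrow> i = j" if "i < Suc n" "j < Suc n" for i j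
    using gdist_shortest_walk_nth[OF P(1,2)] gdist_shortest_walk_nth[OF Q(1,2)] P(3,4) Q(3,4) that
      n_def eq by metis
  moreover have "P ! 0 = Q ! 0" "P ! n = x" "Q ! n = y"
    using P Q by (auto simp: hd_conv_nth last_conv_nth is_walk_def)
  moreover have "distinct P" "distinct Q"
    using shortest_walk_distinct[OF P(1,2)] shortest_walk_distinct[OF Q(1,2)] P Q n_def eq by simp_all
  ultimately show ?thesis using has_cycle_if_walks_diverge[OF P(1) _ P(4) Q(1) _ Q(4)] xy by simp
qed

lemma tree_gdist_edge_parity:
  assumes "is_tree Vs E" "r \<in> Vs" "{x, y} \<in> E"
  shows "even (gdist E r x) \<longleftrightarrow> odd (gdist E r y)"
proof -
  have "x \<noteq> y" "x \<in> Vs" "y \<in> Vs"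
    using simple_graph_edgeD assms unfolding is_tree_def by metis+
  moreover obtain p q where "is_walk E p" "hd p = r" "last p = x" "is_walk E q" "hd q = r" "last q = y"
    using assms(1,2) \<open>x \<in> Vs\<close> \<open>y \<in> Vs\<close> unfolding is_tree_def connected_graph_def by metis
  moreover have "{y, x} \<in> E" using assms(3) by (simp add: insert_commute)
  moreover have "\<not> has_cycle E" using assms(1) by (simp add: is_tree_def)
  ultimately have "gdist E r y \<le> Suc (gdist E r x)" "gdist E r x \<le> Suc (gdist E r y)"
    "gdist E r x \<noteq> gdist E r y"
    using gdist_edge_le has_cycle_if_gdist_eq assms(3) by metis+
  then have "gdist E r y = Suc (gdist E r x) \<or> gdist E r x = Suc (gdist E r y)" by linarith
  then show ?thesis by auto
qed

subsection \<open>Leaves at the end of a longest path\<close>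

definition leaf :: "'a set set \<Rightarrow> 'a \<Rightarrow> 'a \<Rightarrow> bool" where
  "leaf E l u \<longleftrightarrow> {l, u} \<in> E \<and> (\<forall>e\<in>E. l \<in> e \<longrightarrow> e = {l, u})"

lemma leaf_edge: "leaf E l u \<Longrightarrow> {l, u} \<in> E"
  by (simp add: leaf_def)

lemma leaf_neighbour: "leaf E l u \<Longrightarrow> {l, y} \<in> E \<Longrightarrow> y = u"
  unfolding leaf_def by (auto simp: doubleton_eq_iff)

lemma has_cycle_if_chord:
  assumes "is_walk E p" "distinct p" "i + 2 \<le> j" "j < length p" "{p ! i, p ! j} \<in> E"
  shows "has_cycle E"
proof -
  define C where "C = take (Suc j - i) (drop i p)"
  have len: "length C = Suc j - i" unfolding C_def using assms by simp
  have "is_walk E C" "distinct C"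
    unfolding C_def using assms by (simp_all add: is_walk_take is_walk_drop)
  moreover have "hd C = p ! i" "last C = p ! j"
    using assms len by (auto simp: C_def hd_conv_nth last_conv_nth)
  moreover have "3 \<le> length C" using len assms(3) by simp
  ultimately show ?thesis unfolding has_cycle_def using assms(5) by (metis insert_commute)
qed

definition simple_paths :: "'a set \<Rightarrow> 'a set set \<Rightarrow> 'a \<Rightarrow> 'a list set" where
  "simple_paths Vs E v = {p. distinct p \<and> set p \<subseteq> Vs \<and> is_walk E p \<and> hd p = v}"

definition longest_path :: "'a set \<Rightarrow> 'a set set \<Rightarrow> 'a \<Rightarrow> 'a list \<Rightarrow> bool" where
  "longest_path Vs E v p \<longleftrightarrow>
     p \<in> simple_paths Vs E v \<and> (\<forall>q\<in>simple_paths Vs E v. length q \<le> length p)"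

lemma longest_path_exists:
  assumes "finite Vs" "v \<in> Vs"
  obtains p where "longest_path Vs E v p"
proof -
  have "length q < Suc (card Vs)" if "q \<in> simple_paths Vs E v" for q
  proof -
    have "distinct q" "set q \<subseteq> Vs" using that by (auto simp: simple_paths_def)
    then show ?thesis using card_mono[OF assms(1)] distinct_card[of q] by (metis le_imp_less_Suc)
  qed
  moreover have "[v] \<in> simple_paths Vs E v"
    using assms(2) by (simp add: simple_paths_def is_walk_def)
  ultimately show ?thesis
    using that ex_has_greatest_nat[of "\<lambda>q. q \<in> simple_paths Vs E v" "[v]" length "Suc (card Vs)"]
    unfolding longest_path_def by blast
qed

lemma longest_pathD:
  assumes "longest_path Vs E v p"
  shows "distinct p" "set p \<subseteq> Vs" "is_walk E p" "hd p = v" "p \<noteq> []"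
    "\<And>q. q \<in> simple_paths Vs E v \<Longrightarrow> length q \<le> length p"
  using assms by (auto simp: longest_path_def simple_paths_def is_walk_def)

context
  fixes Vs E
  assumes simple: "simple_graph Vs E" and acyclic: "\<not> has_cycle E"
begin

lemma longest_path_last_neighbour:
  assumes p: "longest_path Vs E v p" and e: "{last p, y} \<in> E"
  shows "2 \<le> length p \<and> y = p ! (length p - 2)"
proof -
  note pw = longest_pathD[OF p]
  have last: "last p = p ! (length p - 1)" using pw(5) by (simp add: last_conv_nth)
  have "y \<in> set p"
  proof (rule ccontr)
    assume "y \<notin> set p"
    then have "p @ [y] \<in> simple_paths Vs E v"
      using pw e simple_graph_edgeD[OF simple e] by (auto simp: simple_paths_def intro: is_walk_snoc)
    then show False using pw(6) by fastforce
  qed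
  then obtain i where i: "i < length p" "y = p ! i" by (metis in_set_conv_nth)
  have "i \<noteq> length p - 1" using simple_graph_edgeD[OF simple e] i last by auto
  moreover have "\<not> i + 2 \<le> length p - 1"
  proof
    assume "i + 2 \<le> length p - 1"
    moreover have "length p - 1 < length p" "{p ! i, p ! (length p - 1)} \<in> E"
      using i e last by (auto simp: insert_commute)
    ultimately show False using has_cycle_if_chord[OF pw(3,1)] acyclic by blast
  qed
  ultimately have "i = length p - 2" "2 \<le> length p" using i by linarith+
  then show ?thesis using i by simp
qed

lemma longest_path_last_leaf:
  assumes p: "longest_path Vs E v p" and "2 \<le> length p"
  shows "leaf E (last p) (p ! (length p - 2))"
  unfolding leaf_def
proof (intro conjI ballI impI)
  have "{p ! (length p - 2), p ! Suc (length p - 2)} \<in> E"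
    using longest_pathD(3)[OF p] assms(2) by (simp add: is_walk_def)
  moreover have "Suc (length p - 2) = length p - 1" "last p = p ! (length p - 1)"
    using assms(2) by (simp, subst last_conv_nth, auto)
  ultimately show "{last p, p ! (length p - 2)} \<in> E" by (simp add: insert_commute)
  fix e assume "e \<in> E" "last p \<in> e"
  then obtain y where "e = {last p, y}" using simple_graph_edge_through[OF simple] by blast
  then show "e = {last p, p ! (length p - 2)}"
    using longest_path_last_neighbour[OF p] \<open>e \<in> E\<close> by blast
qed

text \<open>A neighbour y of the penultimate vertex u other than the last two path vertices is
  off the path, since otherwise it would close a cycle; replacing the last vertex by y
  gives another longest path, which ends in a leaf.\<close>

lemma longest_path_penultimate_neighbour:
  assumes p: "longest_path Vs E v p" and n3: "3 \<le> length p"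
    and yu: "{y, p ! (length p - 2)} \<in> E" and y: "y \<noteq> p ! (length p - 3)" "y \<noteq> last p"
  shows "leaf E y (p ! (length p - 2)) \<and> y \<noteq> v"
proof -
  note pw = longest_pathD[OF p]
  define n u where "n = length p" and "u = p ! (length p - 2)"
  have "y \<notin> set p"
  proof
    assume "y \<in> set p"
    then obtain i where i: "i < n" "y = p ! i" unfolding n_def by (metis in_set_conv_nth)
    have "i \<noteq> n - 1" "i \<noteq> n - 2" "i \<noteq> n - 3"
      using y simple_graph_edgeD(1)[OF simple yu] i pw(5) unfolding n_def by (auto simp: last_conv_nth)
    then have "i + 2 \<le> n - 2" using i n3 n_def by linarith
    moreover have "n - 2 < length p" using n3 n_def by simp
    ultimately show False using has_cycle_if_chord[OF pw(3,1), of i "n - 2"] acyclic yu i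
      unfolding n_def by simp
  qed
  define q where "q = take (n - 1) p @ [y]"
  have tk: "take (n - 1) p = take (n - 2) p @ [u]"
  proof -
    have "n - 1 = Suc (n - 2)" "n - 2 < length p" using n3 n_def by auto
    then show ?thesis using take_Suc_conv_app_nth unfolding u_def n_def by metis
  qed
  have "is_walk E (take (n - 1) p)" "take (n - 1) p \<noteq> []" "hd (take (n - 1) p) = v"
    using pw(4,5) is_walk_take[OF pw(3), of "n - 1"] n3 n_def by simp_all
  moreover have "last (take (n - 1) p) = u" unfolding tk by simp
  ultimately have "is_walk E q" "hd q = v"
    using is_walk_snoc[of E "take (n - 1) p" y] yu unfolding q_def u_def by (simp_all add: insert_commute)
  moreover have "distinct q" "set q \<subseteq> Vs"
    using pw(1,2) \<open>y \<notin> set p\<close> simple_graph_edgeD[OF simple yu] unfolding q_def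
    by (auto dest: in_set_takeD)
  ultimately have "q \<in> simple_paths Vs E v" by (simp add: simple_paths_def)
  moreover have "length q = n" "last q = y" "q ! (length q - 2) = u"
    using n3 unfolding q_def n_def u_def by (auto simp: nth_append numeral_2_eq_2)
  ultimately have "longest_path Vs E v q" "last q = y" "q ! (length q - 2) = u" "2 \<le> length q"
    using pw(6) n3 unfolding longest_path_def n_def by auto
  then have "leaf E y u" using longest_path_last_leaf[of v q] n3 n_def by simp
  moreover have "v \<in> set p" using pw(4,5) by auto
  ultimately show ?thesis using \<open>y \<notin> set p\<close> unfolding u_def by auto
qed

text \<open>Take u and w to be the last but one and last but two vertices of a longest path
  from v0.\<close>

lemma leaf_star_exists:
  assumes v0: "v0 \<in> Vs" and z: "{v0, z} \<in> E"
  obtains l where "leaf E l v0"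
  | l u w where "leaf E l u" "l \<noteq> w" "u \<noteq> v0" "{w, u} \<in> E"
      "\<And>y. {y, u} \<in> E \<Longrightarrow> y \<noteq> w \<Longrightarrow> leaf E y u \<and> y \<noteq> v0"
proof -
  obtain p where p: "longest_path Vs E v0 p"
    using longest_path_exists[OF _ v0] simple by (auto simp: simple_graph_def)
  note pw = longest_pathD[OF p]
  have "[v0, z] \<in> simple_paths Vs E v0"
    using simple_graph_edgeD[OF simple z] z by (simp add: simple_paths_def is_walk_def)
  then have "2 \<le> length p" using pw(6) by fastforce
  define n where "n = length p"
  show ?thesis
  proof (cases "n = 2")
    case True
    then show ?thesis
      using that(1) longest_path_last_leaf[OF p] pw(4,5) unfolding n_def by (simp add: hd_conv_nth)
  next
    case False
    then have n3: "3 \<le> n" using \<open>2 \<le> length p\<close> n_def by simp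
    define l u w where "l = last p" and "u = p ! (n - 2)" and "w = p ! (n - 3)"
    have "leaf E l u" using longest_path_last_leaf[OF p] n3 unfolding n_def l_def u_def by simp
    have l: "l = p ! (n - 1)" unfolding l_def n_def using pw(5) by (simp add: last_conv_nth)
    have distinct_idx: "\<And>i j. i < n \<Longrightarrow> j < n \<Longrightarrow> p ! i = p ! j \<longleftrightarrow> i = j"
      using pw(1) nth_eq_iff_index_eq unfolding n_def by blast
    have "l \<noteq> w" "u \<noteq> v0" using distinct_idx[of "n - 1" "n - 3"] distinct_idx[of "n - 2" 0] n3 pw
      unfolding l u_def w_def by (auto simp: hd_conv_nth)
    moreover have "{w, u} \<in> E"
    proof -
      have "Suc (n - 3) = n - 2" "Suc (n - 3) < length p" using n3 n_def by auto
      then show ?thesis using pw(3) unfolding is_walk_def u_def w_def by metis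
    qed
    moreover have "leaf E y u \<and> y \<noteq> v0" if "{y, u} \<in> E" "y \<noteq> w" for y
    proof (cases "y = l")
      case True
      then show ?thesis
        using \<open>leaf E l u\<close> distinct_idx[of "n - 1" 0] n3 pw unfolding l by (auto simp: hd_conv_nth)
    next
      case False
      then show ?thesis
        using longest_path_penultimate_neighbour[OF p, of y] that n3 unfolding n_def u_def w_def l_def
        by simp
    qed
    ultimately show ?thesis using that(2) \<open>leaf E l u\<close> by blast
  qed
qed

end

subsection \<open>Weighted matching sums\<close>

definition del_verts :: "'a set set \<Rightarrow> 'a set \<Rightarrow> 'a set set" where
  "del_verts E X = {e \<in> E. e \<inter> X = {}}"

definition matchings :: "'a set set \<Rightarrow> 'a set \<Rightarrow> 'a set \<Rightarrow> 'a set set set" where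
  "matchings E S Z = {M. is_matching E M \<and> S \<subseteq> \<Union>M \<and> \<Union>M \<inter> Z = {}}"

definition matching_sum :: "'a set set \<Rightarrow> 'a set \<Rightarrow> 'a set \<Rightarrow> ('a \<Rightarrow> real) \<Rightarrow> 'a set \<Rightarrow> real" where
  "matching_sum E S J a Z = (\<Sum>M\<in>matchings E S Z. \<Prod>v\<in>J - \<Union>M. a v)"

lemma del_verts_del_verts [simp]: "del_verts (del_verts E X) Y = del_verts E (X \<union> Y)"
  unfolding del_verts_def by blast

lemma del_verts_subset: "del_verts E X \<subseteq> E"
  unfolding del_verts_def by blast

lemma del_verts_leaf:
  assumes "leaf E x u" "u \<in> X"
  shows "del_verts E (insert x X) = del_verts E X"
  using assms unfolding leaf_def del_verts_def by blast

lemma finite_del_verts: "finite E \<Longrightarrow> finite (del_verts E X)"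
  using finite_subset[OF del_verts_subset] .

lemma is_matching_del_verts: "is_matching (del_verts E X) M \<longleftrightarrow> is_matching E M \<and> \<Union>M \<inter> X = {}"
  unfolding is_matching_def del_verts_def by blast

lemma is_matching_insert:
  "is_matching E M \<Longrightarrow> e \<in> E \<Longrightarrow> \<Union>M \<inter> e = {} \<Longrightarrow> is_matching E (insert e M)"
  unfolding is_matching_def by blast

lemma is_matching_remove:
  assumes "is_matching E M" "e \<in> M"
  shows "is_matching E (M - {e})" "\<Union>(M - {e}) \<inter> e = {}"
  using assms unfolding is_matching_def by blast+

lemma finite_matchings: "finite E \<Longrightarrow> finite (matchings E S Z)"
  unfolding matchings_def is_matching_def by (rule finite_subset[of _ "Pow E"]) auto

lemma matchings_insert_avoided: "matchings E S (insert w Z) = matchings (del_verts E {w}) S Z"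
  unfolding matchings_def is_matching_def del_verts_def by blast

lemma matching_sum_cong:
  "(\<And>v. v \<in> J \<Longrightarrow> a v = b v) \<Longrightarrow> matching_sum E S J a Z = matching_sum E S J b Z"
  unfolding matching_sum_def by (intro sum.cong prod.cong) auto

lemma matching_sum_split:
  assumes "finite E" "w \<notin> S"
  shows "matching_sum E S J a Z = matching_sum E (insert w S) J a Z + matching_sum E S J a (insert w Z)"
proof -
  have "matchings E S Z = matchings E (insert w S) Z \<union> matchings E S (insert w Z)"
    "matchings E (insert w S) Z \<inter> matchings E S (insert w Z) = {}"
    using assms(2) unfolding matchings_def by auto
  then show ?thesis
    unfolding matching_sum_def using finite_matchings[OF assms(1)] by (simp add: sum.union_disjoint)
qed

lemma matching_sum_unmatched:
  assumes "finite J" "w \<in> J" "\<And>M. M \<in> matchings E S Z \<Longrightarrow> w \<notin> \<Union>M"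
  shows "matching_sum E S J a Z = a w * matching_sum E S (J - {w}) a Z"
  unfolding matching_sum_def sum_distrib_left
proof (rule sum.cong[OF refl])
  fix M assume "M \<in> matchings E S Z"
  then have "J - \<Union>M = insert w (J - {w} - \<Union>M)" using assms(2,3) by blast
  then show "(\<Prod>v\<in>J - \<Union>M. a v) = a w * (\<Prod>v\<in>J - {w} - \<Union>M. a v)"
    using assms(1) by simp
qed

lemma matching_sum_matched:
  assumes "w \<in> S"
  shows "matching_sum E S J a Z = matching_sum E S (J - {w}) a Z"
  unfolding matching_sum_def
proof (rule sum.cong[OF refl])
  fix M assume "M \<in> matchings E S Z"
  then have "J - \<Union>M = J - {w} - \<Union>M" using assms unfolding matchings_def by blast
  then show "(\<Prod>v\<in>J - \<Union>M. a v) = (\<Prod>v\<in>J - {w} - \<Union>M. a v)" by simp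
qed

text \<open>A leaf that must be saturated forces its edge into every matching.\<close>

lemma matchings_pendant_bij:
  assumes leaf: "leaf E l u" and "l \<in> S" "l \<notin> Z" "u \<notin> Z"
  shows "bij_betw (insert {l, u}) (matchings (del_verts E {l, u}) (S - {l, u}) Z) (matchings E S Z)"
proof (rule bij_betw_byWitness[where f' = "\<lambda>M. M - {{l, u}}"])
  have lu: "{l, u} \<in> E" "\<And>e. e \<in> E \<Longrightarrow> l \<in> e \<Longrightarrow> e = {l, u}" using leaf by (auto simp: leaf_def)
  have forced: "{l, u} \<in> M" if M: "M \<in> matchings E S Z" for M
  proof -
    obtain e where "e \<in> M" "l \<in> e" using M \<open>l \<in> S\<close> unfolding matchings_def by blast
    moreover have "M \<subseteq> E" using M unfolding matchings_def is_matching_def by blast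
    ultimately show ?thesis using lu(2) by blast
  qed
  show "\<forall>M\<in>matchings (del_verts E {l, u}) (S - {l, u}) Z. insert {l, u} M - {{l, u}} = M"
    unfolding matchings_def is_matching_del_verts by blast
  show "\<forall>M\<in>matchings E S Z. insert {l, u} (M - {{l, u}}) = M"
    using forced by blast
  show "insert {l, u} ` matchings (del_verts E {l, u}) (S - {l, u}) Z \<subseteq> matchings E S Z"
  proof clarify
    fix M assume "M \<in> matchings (del_verts E {l, u}) (S - {l, u}) Z"
    then have "is_matching E M" "\<Union>M \<inter> {l, u} = {}" "S - {l, u} \<subseteq> \<Union>M" "\<Union>M \<inter> Z = {}"
      unfolding matchings_def is_matching_del_verts by auto
    then show "insert {l, u} M \<in> matchings E S Z"
      using is_matching_insert[OF _ lu(1)] assms(3,4) unfolding matchings_def by auto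
  qed
  show "(\<lambda>M. M - {{l, u}}) ` matchings E S Z \<subseteq> matchings (del_verts E {l, u}) (S - {l, u}) Z"
  proof clarify
    fix M assume M: "M \<in> matchings E S Z"
    then have "is_matching E M" "S \<subseteq> \<Union>M" "\<Union>M \<inter> Z = {}" unfolding matchings_def by auto
    moreover have "\<Union>M = \<Union>(M - {{l, u}}) \<union> {l, u}" using forced[OF M] by blast
    ultimately show "M - {{l, u}} \<in> matchings (del_verts E {l, u}) (S - {l, u}) Z"
      using is_matching_remove[of E M "{l, u}"] forced[OF M]
      unfolding matchings_def is_matching_del_verts by auto
  qed
qed

lemma matching_sum_pendant:
  assumes "leaf E l u" "l \<in> S" "l \<notin> Z" "u \<notin> Z"
  shows "matching_sum E S J a Z = matching_sum (del_verts E {l, u}) (S - {l, u}) (J - {l, u}) a Z"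
proof -
  have "J - \<Union>(insert {l, u} M) = J - {l, u} - \<Union>M" for M by blast
  then show ?thesis
    using sum.reindex_bij_betw[OF matchings_pendant_bij[OF assms], of "\<lambda>M. \<Prod>v\<in>J - \<Union>M. a v"]
    unfolding matching_sum_def by simp
qed

lemma matchings_pendant_blocked:
  assumes "leaf E l u" "l \<in> S" "u \<in> Z"
  shows "matchings E S Z = {}"
proof (rule equals0I)
  fix M assume M: "M \<in> matchings E S Z"
  then obtain e where "e \<in> M" "l \<in> e" using \<open>l \<in> S\<close> unfolding matchings_def by blast
  moreover have "M \<subseteq> E" using M unfolding matchings_def is_matching_def by blast
  ultimately have "u \<in> \<Union>M" using assms(1) unfolding leaf_def by blast
  then show False using M \<open>u \<in> Z\<close> unfolding matchings_def by blast
qed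

lemma matching_sum_expand_vertex:
  assumes "finite E" "finite J" "w \<in> J" "w \<notin> S"
  shows "matching_sum E S J a Z = matching_sum E (insert w S) (J - {w}) a Z
           + a w * matching_sum (del_verts E {w}) S (J - {w}) a Z"
proof -
  have "matching_sum E S J a Z = matching_sum E (insert w S) J a Z + matching_sum E S J a (insert w Z)"
    by (rule matching_sum_split[OF assms(1,4)])
  also have "matching_sum E (insert w S) J a Z = matching_sum E (insert w S) (J - {w}) a Z"
    by (rule matching_sum_matched) simp
  also have "matching_sum E S J a (insert w Z) = a w * matching_sum E S (J - {w}) a (insert w Z)"
    by (rule matching_sum_unmatched[OF assms(2,3)]) (auto simp: matchings_def)
  also have "matching_sum E S (J - {w}) a (insert w Z) = matching_sum (del_verts E {w}) S (J - {w}) a Z"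
    unfolding matching_sum_def matchings_insert_avoided ..
  finally show ?thesis .
qed

lemma matching_sum_free_leaf:
  assumes "finite E" "finite J" "leaf E l u" "l \<notin> S" "l \<in> J" "l \<notin> Z" "u \<notin> Z"
  shows "matching_sum E S J a Z = matching_sum (del_verts E {l, u}) (S - {u}) (J - {l, u}) a Z
           + a l * matching_sum (del_verts E {l}) S (J - {l}) a Z"
proof -
  have "insert l S - {l, u} = S - {u}" "J - {l} - {l, u} = J - {l, u}" using assms(4) by auto
  then have "matching_sum E (insert l S) (J - {l}) a Z
      = matching_sum (del_verts E {l, u}) (S - {u}) (J - {l, u}) a Z"
    using matching_sum_pendant[OF assms(3) _ assms(6,7), of "insert l S"] by simp
  then show ?thesis using matching_sum_expand_vertex[OF assms(1,2,5,4)] by simp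
qed

text \<open>The two leaves combine like resistors in parallel.\<close>

lemma matching_sum_parallel_leaves:
  assumes fin: "finite E" "finite J"
    and leaves: "leaf E l u" "leaf E x u" "l \<noteq> x"
    and J: "l \<in> J" "x \<in> J" "u \<notin> J" and S: "u \<in> S" "l \<notin> S" "x \<notin> S"
    and Z: "l \<notin> Z" "x \<notin> Z" "u \<notin> Z"
    and pos: "a x + a l \<noteq> 0"
  shows "matching_sum E S J a Z
    = (a x + a l) * matching_sum (del_verts E {l}) S (J - {l}) (a(x := a x * a l / (a x + a l))) Z"
proof -
  define a' where "a' = a(x := a x * a l / (a x + a l))"
  define P where "P = matching_sum (del_verts E {l, x, u}) (S - {u}) (J - {l, x}) a Z"
  define Q where "Q = matching_sum (del_verts E {l, x}) S (J - {l, x}) a Z"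
  have sets: "J - {l} - {x, u} = J - {l, x}" "J - {l} - {x} = J - {l, x}" "J - {l, u} - {x} = J - {l, x}"
    using J by auto
  have "leaf (del_verts E {l}) x u"
    using leaves(2,3) J unfolding leaf_def del_verts_def by auto
  then have "matching_sum (del_verts E {l}) S (J - {l}) b Z
      = matching_sum (del_verts E {l, x, u}) (S - {u}) (J - {l, x}) b Z
        + b x * matching_sum (del_verts E {l, x}) S (J - {l, x}) b Z" for b
    using matching_sum_free_leaf[of "del_verts E {l}" "J - {l}" x u S Z b] finite_del_verts[OF fin(1), of "{l}"] fin J S Z
      leaves(3) sets by (simp add: insert_commute)
  moreover have "matching_sum (del_verts E {l, x}) S (J - {l, x}) a' Z = Q"
    "matching_sum (del_verts E {l, x, u}) (S - {u}) (J - {l, x}) a' Z = P"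
    unfolding P_def Q_def a'_def by (rule matching_sum_cong; simp)+
  ultimately have reduced: "matching_sum (del_verts E {l}) S (J - {l}) a' Z = P + a' x * Q"
    "matching_sum (del_verts E {l}) S (J - {l}) a Z = P + a x * Q"
    unfolding P_def Q_def by simp_all
  have "del_verts E {l, u} = del_verts E {l, x, u}"
    using del_verts_leaf[OF leaves(2), of "{l, u}"] by (simp add: insert_commute)
  moreover have "matching_sum (del_verts E {l, x, u}) (S - {u}) (J - {l, u}) a Z
      = a x * matching_sum (del_verts E {l, x, u}) (S - {u}) (J - {l, u} - {x}) a Z"
    by (rule matching_sum_unmatched)
      (use fin J leaves(3) in \<open>auto simp: matchings_def is_matching_def del_verts_def\<close>)
  ultimately have "matching_sum E S J a Z = a x * P + a l * (P + a x * Q)"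
    using matching_sum_free_leaf[OF fin leaves(1) S(2) J(1) Z(1,3), of a] reduced(2) sets(3)
    unfolding P_def by simp
  also have "\<dots> = (a x + a l) * (P + a' x * Q)"
    using pos unfolding a'_def by (simp add: field_simps)
  finally show ?thesis using reduced(1) unfolding a'_def by simp
qed

text \<open>The leaf is absorbed into w like a resistor in series.\<close>

lemma matching_sum_series:
  assumes fin: "finite E" "finite J"
    and leaves: "leaf E l u" "leaf (del_verts E {l}) u w" "w \<noteq> u"
    and J: "l \<in> J" "u \<notin> J" and S: "u \<in> S" "l \<notin> S" "w \<in> S \<longleftrightarrow> w \<notin> J"
    and Z: "l \<notin> Z" "u \<notin> Z" "w \<notin> Z"
  shows "matching_sum E S J a Z = matching_sum (del_verts E {l, u}) (S - {u, w})
           (insert w (J - {l})) (a(w := (if w \<in> J then a w else 0) + a l)) Z"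
proof -
  define E' S' a' where "E' = del_verts E {l, u}" and "S' = S - {u, w}"
    and "a' = a(w := (if w \<in> J then a w else 0) + a l)"
  define F R where "F = matching_sum E' (insert w S') (J - {l, w}) a Z"
    and "R = matching_sum (del_verts E' {w}) S' (J - {l, w}) a Z"
  have "w \<noteq> l" using leaves(2) by (auto simp: leaf_def del_verts_def)
  have sets: "J - {l, u} = J - {l}" "J - {l} - {u, w} = J - {l, w}" "J - {l} - {w} = J - {l, w}"
    "insert w (J - {l}) - {w} = J - {l, w}"
    using J by auto
  have "finite E'" "w \<notin> S'" unfolding E'_def S'_def using finite_del_verts[OF fin(1)] by auto
  have "matching_sum (del_verts E {l}) S (J - {l}) a Z = R"
    using matching_sum_pendant[OF leaves(2) S(1) Z(2,3), of "J - {l}" a] sets(2)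
    unfolding R_def E'_def S'_def by (simp add: insert_commute)
  then have "matching_sum E S J a Z = matching_sum E' (S - {u}) (J - {l}) a Z + a l * R"
    using matching_sum_free_leaf[OF fin leaves(1) S(2) J(1) Z(1,2)] sets(1) unfolding E'_def by simp
  moreover have "matching_sum E' (S - {u}) (J - {l}) a Z = F + (if w \<in> J then a w * R else 0)"
  proof (cases "w \<in> J")
    case True
    then have "S - {u} = S'" using S unfolding S'_def by auto
    then show ?thesis
      using matching_sum_expand_vertex[OF \<open>finite E'\<close> _ _ \<open>w \<notin> S'\<close>, of "J - {l}" a Z] fin(2) True
        \<open>w \<noteq> l\<close> sets(3) unfolding F_def R_def by simp
  next
    case False
    then have "S - {u} = insert w S'" "J - {l, w} = J - {l}" using S leaves(3) unfolding S'_def by auto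
    then show ?thesis unfolding F_def using False by simp
  qed
  moreover have "matching_sum E' S' (insert w (J - {l})) a' Z = F + a' w * R"
  proof -
    have "matching_sum E' (insert w S') (J - {l, w}) a' Z = F"
      unfolding F_def a'_def by (rule matching_sum_cong) auto
    moreover have "matching_sum (del_verts E' {w}) S' (J - {l, w}) a' Z = R"
      unfolding R_def a'_def by (rule matching_sum_cong) auto
    ultimately show ?thesis
      using matching_sum_expand_vertex[OF \<open>finite E'\<close> _ _ \<open>w \<notin> S'\<close>, of "insert w (J - {l})" a' Z]
        fin(2) sets(4) by simp
  qed
  moreover have "a' w = (if w \<in> J then a w else 0) + a l" unfolding a'_def by simp
  ultimately show ?thesis unfolding E'_def S'_def a'_def[symmetric]
    by (cases "w \<in> J") (simp_all add: algebra_simps)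
qed

lemma matching_sum_series_avoided:
  assumes fin: "finite E" "finite J"
    and leaves: "leaf E l u" "leaf (del_verts E {l}) u w"
    and J: "l \<in> J" "u \<notin> J" "w \<in> J" and S: "u \<in> S" "l \<notin> S" "w \<notin> S"
    and Z: "l \<notin> Z" "u \<notin> Z" "w \<in> Z"
  shows "(a w + a l) * matching_sum E S J a Z
    = a w * matching_sum (del_verts E {l, u}) (S - {u, w}) (insert w (J - {l})) (a(w := a w + a l)) Z"
proof -
  define E' S' where "E' = del_verts E {l, u}" and "S' = S - {u, w}"
  define X where "X = matching_sum E' S' (J - {l, w}) a Z"
  have "w \<noteq> l" using leaves(2) by (auto simp: leaf_def del_verts_def)
  have unmatched: "\<And>M. M \<in> matchings E'' S'' Z \<Longrightarrow> w \<notin> \<Union>M" for E'' S''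
    using Z(3) unfolding matchings_def by blast
  have "matching_sum (del_verts E {l}) S (J - {l}) a Z = 0"
    using matchings_pendant_blocked[OF leaves(2) S(1) Z(3)] by (simp add: matching_sum_def)
  moreover have "S - {u} = S'" "J - {l, u} = J - {l}" using J S unfolding S'_def by auto
  ultimately have "matching_sum E S J a Z = matching_sum E' S' (J - {l}) a Z"
    using matching_sum_free_leaf[OF fin leaves(1) S(2) J(1) Z(1,2), of a] unfolding E'_def by simp
  also have "\<dots> = a w * matching_sum E' S' (J - {l} - {w}) a Z"
    by (rule matching_sum_unmatched) (use fin(2) J \<open>w \<noteq> l\<close> unmatched in auto)
  also have "J - {l} - {w} = J - {l, w}" by auto
  finally have "matching_sum E S J a Z = a w * X" unfolding X_def .
  moreover have "matching_sum E' S' (insert w (J - {l})) (a(w := a w + a l)) Z = (a w + a l) * X"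
  proof -
    have "matching_sum E' S' (J - {l, w}) (a(w := a w + a l)) Z = X"
      unfolding X_def by (rule matching_sum_cong) auto
    moreover have "matching_sum E' S' (insert w (J - {l})) (a(w := a w + a l)) Z
        = (a(w := a w + a l)) w * matching_sum E' S' (insert w (J - {l}) - {w}) (a(w := a w + a l)) Z"
      by (rule matching_sum_unmatched) (use fin(2) unmatched in auto)
    moreover have "insert w (J - {l}) - {w} = J - {l, w}" using J by auto
    ultimately show ?thesis by simp
  qed
  ultimately show ?thesis unfolding E'_def S'_def by simp
qed

lemma sum_differ_at:
  fixes f g :: "'a \<Rightarrow> 'b::ab_group_add"
  assumes "finite A" "x \<in> A" "\<And>v. v \<in> A \<Longrightarrow> v \<noteq> x \<Longrightarrow> f v = g v"
  shows "sum f A = sum g A + (f x - g x)"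
proof -
  have "sum f (A - {x}) = sum g (A - {x})" using assms(3) by (intro sum.cong) auto
  then show ?thesis using sum.remove[OF assms(1,2), of f] sum.remove[OF assms(1,2), of g]
    by (simp add: algebra_simps)
qed

lemma harmonic_energy:
  fixes p q t :: real
  assumes "p + q \<noteq> 0"
  shows "q * (p / (p + q) * t)\<^sup>2 + p * (t * q / (p + q))\<^sup>2 = p * q / (p + q) * t\<^sup>2"
proof -
  have "q * (p / (p + q) * t)\<^sup>2 + p * (t * q / (p + q))\<^sup>2 = p * q * (p + q) * t\<^sup>2 / (p + q)\<^sup>2"
    by (simp add: power_mult_distrib power_divide add_divide_distrib[symmetric] algebra_simps power2_eq_square)
  also have "\<dots> = p * q / (p + q) * t\<^sup>2" using assms by (simp add: power2_eq_square)
  finally show ?thesis .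
qed

lemma proportional_ratio:
  fixes p q x y n :: real
  assumes "0 < p" "0 < q" "q * x = p * y"
  shows "p * n / x = q * n / y"
proof (cases "y = 0")
  case True
  then show ?thesis using assms by simp
next
  case False
  then have "x \<noteq> 0" using assms by auto
  then show ?thesis using False assms(3) by (simp add: field_simps)
qed

lemma degree_del_verts:
  "(\<And>e. e \<in> E \<Longrightarrow> u \<in> e \<Longrightarrow> e \<inter> X = {}) \<Longrightarrow> degree (del_verts E X) u = degree E u"
  unfolding degree_def del_verts_def by (rule arg_cong[where f = card]) blast

subsection \<open>Balanced potentials on weighted forests\<close>

definition balanced :: "('a \<Rightarrow> 'a \<Rightarrow> real) \<Rightarrow> 'a set \<Rightarrow> 'a set \<Rightarrow> ('a \<Rightarrow> real) \<Rightarrow> bool" where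
  "balanced D V U \<phi> \<longleftrightarrow> (\<forall>u\<in>U. (\<Sum>v\<in>V. \<phi> v * D v u) = 0)"

definition energy :: "'a set \<Rightarrow> ('a \<Rightarrow> real) \<Rightarrow> ('a \<Rightarrow> real) \<Rightarrow> real" where
  "energy J a \<phi> = (\<Sum>v\<in>J. a v * (\<phi> v)\<^sup>2)"

lemma energy_fun_upd:
  assumes "finite J" "l \<in> J"
  shows "energy J a (\<phi>(l := c)) = a l * c\<^sup>2 + energy (J - {l}) a \<phi>"
proof -
  have "energy J a (\<phi>(l := c)) = a l * c\<^sup>2 + energy (J - {l}) a (\<phi>(l := c))"
    unfolding energy_def using sum.remove[OF assms, of "\<lambda>v. a v * ((\<phi>(l := c)) v)\<^sup>2"] by simp
  moreover have "energy (J - {l}) a (\<phi>(l := c)) = energy (J - {l}) a \<phi>"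
    unfolding energy_def by (intro sum.cong) auto
  ultimately show ?thesis by simp
qed

definition has_balanced_potential ::
    "('a \<Rightarrow> 'a \<Rightarrow> real) \<Rightarrow> 'a set set \<Rightarrow> 'a set \<Rightarrow> 'a set \<Rightarrow> 'a set \<Rightarrow> 'a set \<Rightarrow> ('a \<Rightarrow> real) \<Rightarrow> 'a \<Rightarrow> bool"
  where "has_balanced_potential D E V U K J a v0 \<longleftrightarrow> (\<exists>\<phi>. balanced D V U \<phi> \<and> \<phi> v0 = 1 \<and>
    energy J a \<phi> = a v0 * matching_sum E (K \<union> U) J a {} / matching_sum E (K \<union> U) J a {v0})"

locale weighted_forest =
  fixes Vs :: "'a set" and E :: "'a set set" and V U K J :: "'a set"
    and D :: "'a \<Rightarrow> 'a \<Rightarrow> real" and a :: "'a \<Rightarrow> real"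
  assumes simple: "simple_graph Vs E"
    and acyclic: "\<not> has_cycle E"
    and V_U: "V \<union> U = Vs" "V \<inter> U = {}"
    and bipartite: "\<And>e. e \<in> E \<Longrightarrow> \<exists>v\<in>V. \<exists>u\<in>U. e = {v, u}"
    and degree_U: "\<And>u. u \<in> U \<Longrightarrow> 2 \<le> degree E u"
    and K_J: "K \<union> J = V" "K \<inter> J = {}"
    and weight_pos: "\<And>v. v \<in> J \<Longrightarrow> 0 < a v"
    and signed: "\<And>v u. v \<in> V \<Longrightarrow> u \<in> U \<Longrightarrow>
      if {v, u} \<in> E then D v u = 1 \<or> D v u = -1 else D v u = 0"
    and matching_sum_pos: "0 < matching_sum E (K \<union> U) J a {}"
begin

lemma finite: "finite Vs" "finite E" "finite V" "finite U" "finite J"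
  using simple simple_graph_finite_edges[OF simple] V_U K_J by (auto simp: simple_graph_def)

lemma edge_sides: "{x, y} \<in> E \<Longrightarrow> x \<in> V \<and> y \<in> U \<or> x \<in> U \<and> y \<in> V"
  using bipartite V_U(2) by (fastforce simp: doubleton_eq_iff)

lemma leaf_sides:
  assumes "leaf E l u" shows "l \<in> V" "u \<in> U"
proof -
  have "{e \<in> E. l \<in> e} = {{l, u}}" using assms unfolding leaf_def by auto
  then have "degree E l = 1" by (simp add: degree_def)
  then show "l \<in> V" "u \<in> U"
    using edge_sides[OF leaf_edge[OF assms]] degree_U by fastforce+
qed

lemma D_off_edge: "v \<in> V \<Longrightarrow> u \<in> U \<Longrightarrow> {v, u} \<notin> E \<Longrightarrow> D v u = 0"
  using signed by simp

lemma D_square: "{v, u} \<in> E \<Longrightarrow> v \<in> V \<Longrightarrow> u \<in> U \<Longrightarrow> D v u * D v u = 1"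
  using signed[of v u] by auto

lemma weighted_forest_del_verts:
  assumes "\<And>u. u \<in> U - X \<Longrightarrow> 2 \<le> degree (del_verts E X) u"
    and "K' \<union> J' = V - X" "K' \<inter> J' = {}" "\<And>v. v \<in> J' \<Longrightarrow> 0 < a' v"
    and "0 < matching_sum (del_verts E X) (K' \<union> (U - X)) J' a' {}"
  shows "weighted_forest (Vs - X) (del_verts E X) (V - X) (U - X) K' J' D a'"
proof (rule weighted_forest.intro)
  show "simple_graph (Vs - X) (del_verts E X)"
    unfolding simple_graph_def
  proof (intro conjI ballI)
    show "finite (Vs - X)" using finite(1) by simp
    fix e assume e: "e \<in> del_verts E X"
    then obtain x y where "x \<noteq> y" "x \<in> Vs" "y \<in> Vs" "e = {x, y}"
      using simple unfolding simple_graph_def del_verts_def by blast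
    moreover have "x \<notin> X" "y \<notin> X" using e \<open>e = {x, y}\<close> unfolding del_verts_def by auto
    ultimately show "\<exists>x y. x \<noteq> y \<and> x \<in> Vs - X \<and> y \<in> Vs - X \<and> e = {x, y}" by blast
  qed
  show "\<not> has_cycle (del_verts E X)" using acyclic has_cycle_mono[OF _ del_verts_subset] by blast
  show "\<exists>v\<in>V - X. \<exists>u\<in>U - X. e = {v, u}" if e: "e \<in> del_verts E X" for e
  proof -
    obtain v u where "v \<in> V" "u \<in> U" "e = {v, u}" using e bipartite unfolding del_verts_def by blast
    then show ?thesis using e unfolding del_verts_def by blast
  qed
  show "if {v, u} \<in> del_verts E X then D v u = 1 \<or> D v u = -1 else D v u = 0"
    if "v \<in> V - X" "u \<in> U - X" for v u
    using that signed[of v u] unfolding del_verts_def by auto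
qed (use assms V_U in auto)

text \<open>No vertex of U other than u is adjacent to l, so only the balance at u changes.\<close>

lemma balanced_pendant_extension:
  assumes leaf: "leaf E l u" and bal: "balanced D (V - {l}) (U - {u}) \<phi>"
  shows "balanced D V U (\<phi>(l := - D l u * (\<Sum>v\<in>V - {l}. \<phi> v * D v u)))"
  unfolding balanced_def
proof
  fix u' assume u': "u' \<in> U"
  define c where "c = - D l u * (\<Sum>v\<in>V - {l}. \<phi> v * D v u)"
  have l: "l \<in> V" "u \<in> U" using leaf_sides[OF leaf] by auto
  have "(\<Sum>v\<in>V. (\<phi>(l := c)) v * D v u') = c * D l u' + (\<Sum>v\<in>V - {l}. \<phi> v * D v u')"
    using sum_differ_at[OF finite(3) l(1), of "\<lambda>v. (\<phi>(l := c)) v * D v u'" "\<lambda>v. \<phi> v * D v u'"]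
      sum.remove[OF finite(3) l(1), of "\<lambda>v. \<phi> v * D v u'"] by simp
  also have "\<dots> = 0"
  proof (cases "u' = u")
    case True
    have "c * D l u = - (D l u * D l u) * (\<Sum>v\<in>V - {l}. \<phi> v * D v u)"
      unfolding c_def by (simp add: algebra_simps)
    then show ?thesis using D_square[OF leaf_edge[OF leaf] l] True by simp
  next
    case False
    then have "D l u' = 0" using D_off_edge l u' leaf_neighbour[OF leaf] by blast
    then show ?thesis using bal u' False unfolding balanced_def by simp
  qed
  finally show "(\<Sum>v\<in>V. (\<phi>(l := c)) v * D v u') = 0" .
qed

lemma balanced_leaf_update:
  assumes "leaf E x u" "balanced D V' (U - {u}) \<phi>"
  shows "balanced D V' (U - {u}) (\<phi>(x := c))"
  unfolding balanced_def
proof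
  fix u' assume u': "u' \<in> U - {u}"
  then have "D x u' = 0" using D_off_edge leaf_sides[OF assms(1)] leaf_neighbour[OF assms(1)] by blast
  then have "(\<Sum>v\<in>V'. (\<phi>(x := c)) v * D v u') = (\<Sum>v\<in>V'. \<phi> v * D v u')"
    by (intro sum.cong) auto
  then show "(\<Sum>v\<in>V'. (\<phi>(x := c)) v * D v u') = 0" using assms(2) u' unfolding balanced_def by simp
qed

end

context weighted_forest
begin

lemma isolated_has_balanced_potential:
  assumes v0: "v0 \<in> J" and isolated: "\<And>e. e \<in> E \<Longrightarrow> v0 \<notin> e"
  shows "has_balanced_potential D E V U K J a v0"
proof -
  define \<phi> where "\<phi> = (\<lambda>v. if v = v0 then 1 else 0 :: real)"
  have "v0 \<in> V" using K_J v0 by auto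
  have "balanced D V U \<phi>"
    unfolding balanced_def
  proof
    fix u assume "u \<in> U"
    then have "D v0 u = 0" using D_off_edge \<open>v0 \<in> V\<close> isolated by blast
    have "(\<Sum>v\<in>V. \<phi> v * D v u) = (\<Sum>v\<in>V. if v = v0 then D v0 u else 0)"
      unfolding \<phi>_def by (intro sum.cong) auto
    also have "\<dots> = 0" using \<open>D v0 u = 0\<close> finite(3) by simp
    finally show "(\<Sum>v\<in>V. \<phi> v * D v u) = 0" .
  qed
  moreover have "energy J a \<phi> = (\<Sum>v\<in>J. if v = v0 then a v0 else 0)"
    unfolding energy_def \<phi>_def by (intro sum.cong) auto
  then have "energy J a \<phi> = a v0" using finite(5) v0 by simp
  moreover have "matchings E (K \<union> U) {v0} = matchings E (K \<union> U) {}"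
    using isolated unfolding matchings_def is_matching_def by blast
  then have "matching_sum E (K \<union> U) J a {v0} = matching_sum E (K \<union> U) J a {}"
    unfolding matching_sum_def by simp
  moreover have "\<phi> v0 = 1" unfolding \<phi>_def by simp
  ultimately show ?thesis
    using matching_sum_pos unfolding has_balanced_potential_def by auto
qed

lemma degree_del_verts_leaf:
  assumes leaf: "leaf E l u" and u': "u' \<in> U" "u' \<noteq> u" and X: "X \<subseteq> {l, u}"
  shows "degree (del_verts E X) u' = degree E u'"
proof (rule degree_del_verts)
  fix e assume e: "e \<in> E" "u' \<in> e"
  then obtain y where y: "e = {u', y}" using simple_graph_edge_through[OF simple] by blast
  have "l \<notin> e" using leaf_neighbour[OF leaf, of u'] leaf_sides[OF leaf] e y u' V_U(2)
    by (auto simp: insert_commute)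
  moreover have "u \<notin> e" using edge_sides[of u' y] e y u' V_U(2) leaf_sides[OF leaf] by auto
  ultimately show "e \<inter> X = {}" using X by blast
qed

subsection \<open>Leaf reductions\<close>

lemma forced_leaf_matching_sum:
  assumes leaf: "leaf E l u" and "l \<in> K" "Z \<subseteq> J"
  shows "matching_sum E (K \<union> U) J a Z
    = matching_sum (del_verts E {l, u}) ((K - {l}) \<union> (U - {l, u})) J a Z"
proof -
  have "l \<in> V" "u \<in> U" "l \<notin> J" using leaf_sides[OF leaf] \<open>l \<in> K\<close> K_J by auto
  then have "K \<union> U - {l, u} = (K - {l}) \<union> (U - {l, u})" "J - {l, u} = J" "u \<notin> Z" "l \<notin> Z"
    using V_U K_J \<open>Z \<subseteq> J\<close> by auto
  then show ?thesis using matching_sum_pendant[OF leaf, of "K \<union> U" Z J a] \<open>l \<in> K\<close> by simp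
qed

lemma forced_leaf_reduction:
  assumes leaf: "leaf E l u" and "l \<in> K"
  shows "weighted_forest (Vs - {l, u}) (del_verts E {l, u}) (V - {l, u}) (U - {l, u}) (K - {l}) J D a"
proof (rule weighted_forest_del_verts)
  show "2 \<le> degree (del_verts E {l, u}) u'" if "u' \<in> U - {l, u}" for u'
    using that degree_del_verts_leaf[OF leaf, of u' "{l, u}"] degree_U by simp
  show "K - {l} \<union> J = V - {l, u}" "(K - {l}) \<inter> J = {}"
    using K_J V_U leaf_sides[OF leaf] \<open>l \<in> K\<close> by auto
  show "0 < matching_sum (del_verts E {l, u}) (K - {l} \<union> (U - {l, u})) J a {}"
    using forced_leaf_matching_sum[OF assms] matching_sum_pos by simp
qed (rule weight_pos)

lemma forced_leaf_lift:
  assumes leaf: "leaf E l u" and "l \<in> K" "v0 \<in> J"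
    and reduced: "has_balanced_potential D (del_verts E {l, u}) (V - {l, u}) (U - {l, u}) (K - {l}) J a v0"
  shows "has_balanced_potential D E V U K J a v0"
proof -
  obtain \<phi> where \<phi>: "balanced D (V - {l, u}) (U - {l, u}) \<phi>" "\<phi> v0 = 1"
    "energy J a \<phi> = a v0 * matching_sum (del_verts E {l, u}) ((K - {l}) \<union> (U - {l, u})) J a {}
       / matching_sum (del_verts E {l, u}) ((K - {l}) \<union> (U - {l, u})) J a {v0}"
    using reduced unfolding has_balanced_potential_def by blast
  have "l \<in> V" "u \<in> U" "l \<notin> J" using leaf_sides[OF leaf] \<open>l \<in> K\<close> K_J by auto
  then have "V - {l, u} = V - {l}" "U - {l, u} = U - {u}" "l \<noteq> v0" using V_U \<open>v0 \<in> J\<close> by auto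
  define \<psi> where "\<psi> = \<phi>(l := - D l u * (\<Sum>v\<in>V - {l}. \<phi> v * D v u))"
  have "balanced D V U \<psi>"
    unfolding \<psi>_def by (rule balanced_pendant_extension[OF leaf]) (use \<phi>(1) \<open>V - {l, u} = V - {l}\<close>
      \<open>U - {l, u} = U - {u}\<close> in simp)
  moreover have "energy J a \<psi> = energy J a \<phi>"
    unfolding energy_def \<psi>_def using \<open>l \<notin> J\<close> by (intro sum.cong) auto
  ultimately show ?thesis
    using \<phi>(2,3) \<open>l \<noteq> v0\<close> forced_leaf_matching_sum[OF leaf \<open>l \<in> K\<close>, of "{}"]
      forced_leaf_matching_sum[OF leaf \<open>l \<in> K\<close>, of "{v0}"] \<open>v0 \<in> J\<close>
    unfolding has_balanced_potential_def \<psi>_def by auto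
qed

lemma parallel_leaves_matching_sum:
  assumes leaves: "leaf E l u" "leaf E x u" "l \<noteq> x" and J: "l \<in> J" "x \<in> J" and Z: "Z \<subseteq> J - {l, x}"
  shows "matching_sum E (K \<union> U) J a Z = (a x + a l) *
    matching_sum (del_verts E {l}) (K \<union> (U - {l})) (J - {l}) (a(x := a x * a l / (a x + a l))) Z"
proof -
  have "u \<in> U" "l \<notin> K \<union> U" "x \<notin> K \<union> U" "u \<notin> J" "U - {l} = U"
    using leaf_sides[OF leaves(1)] J K_J V_U by auto
  moreover have "a x + a l \<noteq> 0" using weight_pos[OF J(1)] weight_pos[OF J(2)] by simp
  ultimately show ?thesis
    using matching_sum_parallel_leaves[OF finite(2,5) leaves J, of "K \<union> U" Z a] Z by auto
qed

lemma parallel_leaves_reduction: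
  assumes leaves: "leaf E l u" "leaf E x u" "l \<noteq> x" and J: "l \<in> J" "x \<in> J"
    and w: "{w, u} \<in> E" "w \<noteq> l" "w \<noteq> x"
  shows "weighted_forest (Vs - {l}) (del_verts E {l}) (V - {l}) (U - {l}) K (J - {l}) D
    (a(x := a x * a l / (a x + a l)))"
proof (rule weighted_forest_del_verts)
  show "2 \<le> degree (del_verts E {l}) u'" if "u' \<in> U - {l}" for u'
  proof (cases "u' = u")
    case True
    have "{{w, u}, {x, u}} \<subseteq> {e \<in> del_verts E {l}. u \<in> e}"
      using w leaf_edge[OF leaves(2)] leaves(3) leaf_sides[OF leaves(1)] V_U(2)
      unfolding del_verts_def by auto
    moreover have "{w, u} \<noteq> {x, u}"
      using w(3) leaf_sides[OF leaves(2)] V_U(2) by (auto simp: doubleton_eq_iff)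
    then have "card {{w, u}, {x, u}} = 2" by simp
    ultimately show ?thesis
      unfolding degree_def True using finite_del_verts[OF finite(2)]
      by (metis (no_types, lifting) card_mono finite_subset mem_Collect_eq subsetI)
  next
    case False
    then show ?thesis using that degree_del_verts_leaf[OF leaves(1), of u' "{l}"] degree_U by simp
  qed
  show "K \<union> (J - {l}) = V - {l}" "K \<inter> (J - {l}) = {}" using K_J J by auto
  show "0 < (a(x := a x * a l / (a x + a l))) v" if "v \<in> J - {l}" for v
    using that weight_pos J by (auto intro!: divide_pos_pos mult_pos_pos add_pos_pos)
  show "0 < matching_sum (del_verts E {l}) (K \<union> (U - {l})) (J - {l}) (a(x := a x * a l / (a x + a l))) {}"
    using parallel_leaves_matching_sum[OF leaves J, of "{}"] matching_sum_pos weight_pos[OF J(1)]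
      weight_pos[OF J(2)] by (simp add: zero_less_mult_iff)
qed

text \<open>The new values at x and l split the old value at x in the ratio of the two weights.\<close>

lemma parallel_leaves_potential:
  assumes leaves: "leaf E l u" "leaf E x u" "l \<noteq> x" and J: "l \<in> J" "x \<in> J"
    and bal: "balanced D (V - {l}) U \<phi>"
  obtains \<chi> where "balanced D V U \<chi>" "\<And>v. v \<noteq> l \<Longrightarrow> v \<noteq> x \<Longrightarrow> \<chi> v = \<phi> v"
    "energy J a \<chi> = energy (J - {l}) (a(x := a x * a l / (a x + a l))) \<phi>"
proof -
  define s where "s = a x + a l"
  have "s \<noteq> 0" using weight_pos[OF J(1)] weight_pos[OF J(2)] unfolding s_def by simp
  have lu: "l \<in> V" "x \<in> V" "u \<in> U" using leaf_sides leaves by auto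
  define \<psi> where "\<psi> = \<phi>(x := \<phi> x * a l / s)"
  have "balanced D (V - {l}) (U - {u}) \<psi>"
    unfolding \<psi>_def using balanced_leaf_update[OF leaves(2)] bal unfolding balanced_def by blast
  have "(\<Sum>v\<in>V - {l}. \<psi> v * D v u) = (\<Sum>v\<in>V - {l}. \<phi> v * D v u) + (\<psi> x * D x u - \<phi> x * D x u)"
    using lu leaves(3) finite(3) unfolding \<psi>_def by (intro sum_differ_at) auto
  also have "\<dots> = - (a x / s) * \<phi> x * D x u"
    using bal lu \<open>s \<noteq> 0\<close> unfolding balanced_def \<psi>_def s_def by (simp add: field_simps)
  finally have sum_u: "(\<Sum>v\<in>V - {l}. \<psi> v * D v u) = - (a x / s) * \<phi> x * D x u" .
  define \<chi> where "\<chi> = \<psi>(l := - D l u * (\<Sum>v\<in>V - {l}. \<psi> v * D v u))"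
  have "balanced D V U \<chi>"
    unfolding \<chi>_def by (rule balanced_pendant_extension[OF leaves(1) \<open>balanced D (V - {l}) (U - {u}) \<psi>\<close>])
  moreover have "\<chi> v = \<phi> v" if "v \<noteq> l" "v \<noteq> x" for v
    using that unfolding \<chi>_def \<psi>_def by simp
  moreover have "energy J a \<chi> = energy (J - {l}) (a(x := a x * a l / s)) \<phi>"
  proof -
    have "(\<chi> l)\<^sup>2 = (D l u * D l u) * (D x u * D x u) * (a x / s * \<phi> x)\<^sup>2"
      unfolding \<chi>_def sum_u by (simp add: power2_eq_square algebra_simps)
    then have "(\<chi> l)\<^sup>2 = (a x / s * \<phi> x)\<^sup>2"
      using D_square[OF leaf_edge[OF leaves(1)] lu(1,3)] D_square[OF leaf_edge[OF leaves(2)] lu(2,3)]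
      by simp
    moreover have "energy J a \<chi> = a l * (\<chi> l)\<^sup>2 + energy (J - {l}) a \<psi>"
      unfolding \<chi>_def using energy_fun_upd[OF finite(5) J(1)] by simp
    moreover have "energy (J - {l}) a \<psi> = energy (J - {l}) (a(x := a x * a l / s)) \<phi>
        + (a x * (\<psi> x)\<^sup>2 - (a(x := a x * a l / s)) x * (\<phi> x)\<^sup>2)"
      unfolding energy_def using finite(5) J leaves(3) by (intro sum_differ_at) (auto simp: \<psi>_def)
    moreover have "a l * (a x / s * \<phi> x)\<^sup>2 + a x * (\<psi> x)\<^sup>2 = a x * a l / s * (\<phi> x)\<^sup>2"
      using harmonic_energy[of "a x" "a l" "\<phi> x"] \<open>s \<noteq> 0\<close> unfolding \<psi>_def s_def by simp
    ultimately show ?thesis by simp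
  qed
  ultimately show ?thesis using that unfolding s_def by blast
qed

lemma parallel_leaves_lift:
  assumes leaves: "leaf E l u" "leaf E x u" "l \<noteq> x" and J: "l \<in> J" "x \<in> J"
    and v0: "v0 \<in> J" "v0 \<noteq> l" "v0 \<noteq> x"
    and reduced: "has_balanced_potential D (del_verts E {l}) (V - {l}) (U - {l}) K (J - {l})
      (a(x := a x * a l / (a x + a l))) v0"
  shows "has_balanced_potential D E V U K J a v0"
proof -
  define a' s where "a' = a(x := a x * a l / (a x + a l))" and "s = a x + a l"
  define N where "N Z = matching_sum (del_verts E {l}) (K \<union> (U - {l})) (J - {l}) a' Z" for Z
  obtain \<phi> where \<phi>: "balanced D (V - {l}) (U - {l}) \<phi>" "\<phi> v0 = 1"
    "energy (J - {l}) a' \<phi> = a' v0 * N {} / N {v0}"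
    using reduced unfolding has_balanced_potential_def a'_def N_def by blast
  have "U - {l} = U" using leaf_sides[OF leaves(1)] V_U by auto
  then obtain \<chi> where \<chi>: "balanced D V U \<chi>" "\<chi> v0 = \<phi> v0" "energy J a \<chi> = energy (J - {l}) a' \<phi>"
    using parallel_leaves_potential[OF leaves J] \<phi>(1) v0 unfolding a'_def by metis
  have "s \<noteq> 0" using weight_pos[OF J(1)] weight_pos[OF J(2)] unfolding s_def by simp
  have "matching_sum E (K \<union> U) J a Z = s * N Z" if "Z \<subseteq> J - {l, x}" for Z
    using parallel_leaves_matching_sum[OF leaves J that] unfolding N_def a'_def s_def .
  then have "a v0 * matching_sum E (K \<union> U) J a {} / matching_sum E (K \<union> U) J a {v0}
      = a' v0 * N {} / N {v0}"
    using v0 \<open>s \<noteq> 0\<close> unfolding a'_def by simp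
  then show ?thesis unfolding has_balanced_potential_def using \<chi> \<phi>(2,3) by auto
qed

lemma series_leaf_del_verts:
  assumes leaf: "leaf E l u" and w: "{w, u} \<in> E" "w \<noteq> l"
    and only: "\<And>y. {y, u} \<in> E \<Longrightarrow> y = w \<or> y = l"
  shows "leaf (del_verts E {l}) u w"
  unfolding leaf_def
proof (intro conjI ballI impI)
  have "u \<noteq> l" using leaf_sides[OF leaf] V_U(2) by auto
  then show "{u, w} \<in> del_verts E {l}" using w unfolding del_verts_def by (auto simp: insert_commute)
  fix e assume e: "e \<in> del_verts E {l}" "u \<in> e"
  then obtain y where "e = {u, y}" using simple_graph_edge_through[OF simple] del_verts_subset by blast
  then show "e = {u, w}" using only[of y] e unfolding del_verts_def by (auto simp: insert_commute)
qed

context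
  fixes l u w
  assumes leaf: "leaf E l u" and l: "l \<in> J" and w: "{w, u} \<in> E" "w \<noteq> l"
    and only: "\<And>y. {y, u} \<in> E \<Longrightarrow> y = w \<or> y = l"
begin

lemma series_sides: "l \<in> V" "u \<in> U" "w \<in> V" "l \<notin> K" "l \<notin> U" "u \<notin> V" "w \<notin> U"
  using leaf_sides[OF leaf] edge_sides[OF w(1)] l K_J V_U by auto

lemma series_matching_sum:
  assumes "Z \<subseteq> J - {l}" "w \<notin> Z"
  shows "matching_sum E (K \<union> U) J a Z = matching_sum (del_verts E {l, u}) ((K - {w}) \<union> (U - {l, u}))
    (insert w (J - {l})) (a(w := (if w \<in> J then a w else 0) + a l)) Z"
proof -
  have "K \<union> U - {u, w} = (K - {w}) \<union> (U - {l, u})" "w \<in> K \<union> U \<longleftrightarrow> w \<notin> J" "u \<notin> J"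
    using series_sides K_J by auto
  moreover have "w \<noteq> u" "l \<notin> Z" "u \<notin> Z" using series_sides assms(1) K_J by auto
  ultimately show ?thesis
    using matching_sum_series[OF finite(2,5) leaf series_leaf_del_verts[OF leaf w only] _ l, of "K \<union> U" Z a]
      series_sides w(2) assms by auto
qed

lemma series_matching_sum_avoided:
  assumes "Z \<subseteq> J - {l}" "w \<in> Z"
  shows "(a w + a l) * matching_sum E (K \<union> U) J a Z = a w * matching_sum (del_verts E {l, u})
    ((K - {w}) \<union> (U - {l, u})) (insert w (J - {l})) (a(w := (if w \<in> J then a w else 0) + a l)) Z"
proof -
  have "w \<in> J" "u \<notin> J" "K \<union> U - {u, w} = (K - {w}) \<union> (U - {l, u})" "w \<notin> K \<union> U"
    "l \<notin> Z" "u \<notin> Z"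
    using assms series_sides K_J by auto
  then show ?thesis
    using matching_sum_series_avoided[OF finite(2,5) leaf series_leaf_del_verts[OF leaf w only] l,
        of "K \<union> U" Z a] series_sides w(2) K_J assms by auto
qed

lemma series_reduction:
  "weighted_forest (Vs - {l, u}) (del_verts E {l, u}) (V - {l, u}) (U - {l, u}) (K - {w})
    (insert w (J - {l})) D (a(w := (if w \<in> J then a w else 0) + a l))"
proof (rule weighted_forest_del_verts)
  show "2 \<le> degree (del_verts E {l, u}) u'" if "u' \<in> U - {l, u}" for u'
    using that degree_del_verts_leaf[OF leaf, of u' "{l, u}"] degree_U by simp
  show "K - {w} \<union> insert w (J - {l}) = V - {l, u}" "(K - {w}) \<inter> insert w (J - {l}) = {}"
    using series_sides w(2) K_J by auto
  show "0 < (a(w := (if w \<in> J then a w else 0) + a l)) v" if "v \<in> insert w (J - {l})" for v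
    using that weight_pos l by (auto simp: add_nonneg_pos less_imp_le)
  show "0 < matching_sum (del_verts E {l, u}) (K - {w} \<union> (U - {l, u})) (insert w (J - {l}))
      (a(w := (if w \<in> J then a w else 0) + a l)) {}"
    using series_matching_sum[of "{}"] matching_sum_pos by simp
qed

lemma series_potential:
  assumes bal: "balanced D (V - {l, u}) (U - {l, u}) \<phi>"
  obtains \<chi> where "balanced D V U \<chi>" "\<And>v. v \<noteq> l \<Longrightarrow> \<chi> v = \<phi> v"
    "energy J a \<chi> = energy (insert w (J - {l})) (a(w := (if w \<in> J then a w else 0) + a l)) \<phi>"
proof -
  have "V - {l, u} = V - {l}" "U - {l, u} = U - {u}" using series_sides by auto
  have "(\<Sum>v\<in>V - {l}. \<phi> v * D v u) = (\<Sum>v\<in>V - {l}. if v = w then \<phi> w * D w u else 0)"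
    using only D_off_edge series_sides(2) by (intro sum.cong) auto
  then have sum_u: "(\<Sum>v\<in>V - {l}. \<phi> v * D v u) = \<phi> w * D w u"
    using finite(3) series_sides(3) w(2) by simp
  define \<chi> where "\<chi> = \<phi>(l := - D l u * (\<Sum>v\<in>V - {l}. \<phi> v * D v u))"
  have "balanced D V U \<chi>"
    unfolding \<chi>_def using balanced_pendant_extension[OF leaf] bal
      \<open>V - {l, u} = V - {l}\<close> \<open>U - {l, u} = U - {u}\<close> by simp
  moreover have "\<chi> v = \<phi> v" if "v \<noteq> l" for v using that unfolding \<chi>_def by simp
  moreover have "energy J a \<chi> = energy (insert w (J - {l})) (a(w := (if w \<in> J then a w else 0) + a l)) \<phi>"
  proof -
    define R where "R = (\<Sum>v\<in>J - {l} - {w}. a v * (\<phi> v)\<^sup>2)"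
    have "(\<chi> l)\<^sup>2 = (D l u * D l u) * (D w u * D w u) * (\<phi> w)\<^sup>2"
      unfolding \<chi>_def sum_u by (simp add: power2_eq_square algebra_simps)
    then have "(\<chi> l)\<^sup>2 = (\<phi> w)\<^sup>2"
      using D_square[OF leaf_edge[OF leaf] series_sides(1,2)] D_square[OF w(1) series_sides(3,2)] by simp
    moreover have "energy J a \<chi> = a l * (\<chi> l)\<^sup>2 + energy (J - {l}) a \<phi>"
      unfolding \<chi>_def using energy_fun_upd[OF finite(5) l] by simp
    moreover have "energy (J - {l}) a \<phi> = (if w \<in> J then a w * (\<phi> w)\<^sup>2 else 0) + R"
      unfolding R_def energy_def using finite(5) w(2) by (auto simp: sum.remove[of "J - {l}" w])
    moreover have "energy (insert w (J - {l})) (a(w := (if w \<in> J then a w else 0) + a l)) \<phi>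
        = ((if w \<in> J then a w else 0) + a l) * (\<phi> w)\<^sup>2
          + (\<Sum>v\<in>J - {l} - {w}. (a(w := (if w \<in> J then a w else 0) + a l)) v * (\<phi> v)\<^sup>2)"
      unfolding energy_def using finite(5) by (simp add: sum.insert_remove)
    moreover have "(\<Sum>v\<in>J - {l} - {w}. (a(w := (if w \<in> J then a w else 0) + a l)) v * (\<phi> v)\<^sup>2) = R"
      unfolding R_def by (intro sum.cong) auto
    ultimately show ?thesis by (simp add: algebra_simps)
  qed
  ultimately show ?thesis using that by blast
qed

lemma series_lift:
  assumes v0: "v0 \<in> J" "v0 \<noteq> l"
    and reduced: "has_balanced_potential D (del_verts E {l, u}) (V - {l, u}) (U - {l, u}) (K - {w})
      (insert w (J - {l})) (a(w := (if w \<in> J then a w else 0) + a l)) v0"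
  shows "has_balanced_potential D E V U K J a v0"
proof -
  define a' where "a' = a(w := (if w \<in> J then a w else 0) + a l)"
  define M N where "M Z = matching_sum E (K \<union> U) J a Z"
    and "N Z = matching_sum (del_verts E {l, u}) ((K - {w}) \<union> (U - {l, u})) (insert w (J - {l})) a' Z"
    for Z
  obtain \<phi> where \<phi>: "balanced D (V - {l, u}) (U - {l, u}) \<phi>" "\<phi> v0 = 1"
    "energy (insert w (J - {l})) a' \<phi> = a' v0 * N {} / N {v0}"
    using reduced unfolding has_balanced_potential_def a'_def N_def by blast
  obtain \<chi> where \<chi>: "balanced D V U \<chi>" "\<chi> v0 = \<phi> v0" "energy J a \<chi> = energy (insert w (J - {l})) a' \<phi>"
    using series_potential[OF \<phi>(1)] v0(2) unfolding a'_def by metis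
  have "M {} = N {}" using series_matching_sum[of "{}"] unfolding M_def N_def a'_def by simp
  moreover have "a v0 * M {} / M {v0} = a' v0 * M {} / N {v0}"
  proof (cases "w = v0")
    case True
    then have "(a w + a l) * M {v0} = a w * N {v0}" "a' v0 = a w + a l"
      using series_matching_sum_avoided[of "{v0}"] v0 unfolding M_def N_def a'_def by auto
    moreover have "0 < a w" "0 < a w + a l" using weight_pos v0(1) l True by (simp_all add: add_pos_pos)
    ultimately show ?thesis
      using True proportional_ratio[of "a w" "a w + a l" "M {v0}" "N {v0}" "M {}"] by simp
  next
    case False
    then show ?thesis using series_matching_sum[of "{v0}"] v0 unfolding M_def N_def a'_def by simp
  qed
  ultimately show ?thesis unfolding has_balanced_potential_def M_def using \<chi> \<phi>(2,3) by auto
qed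

end

end

lemma (in weighted_forest) leaf_star_step:
  assumes v0: "v0 \<in> J"
    and star: "leaf E l u" "l \<noteq> w" "{w, u} \<in> E"
      "\<And>y. {y, u} \<in> E \<Longrightarrow> y \<noteq> w \<Longrightarrow> leaf E y u \<and> y \<noteq> v0"
    and IH: "\<And>Vs' E' V' U' K' J' a'. weighted_forest Vs' E' V' U' K' J' D a' \<Longrightarrow> Vs' \<subset> Vs \<Longrightarrow>
      v0 \<in> J' \<Longrightarrow> has_balanced_potential D E' V' U' K' J' a' v0"
  shows "has_balanced_potential D E V U K J a v0"
proof -
  have in_Vs: "y \<in> Vs" if "leaf E y u" for y using leaf_sides[OF that] V_U by auto
  show ?thesis
  proof (cases "\<exists>y. {y, u} \<in> E \<and> y \<noteq> w \<and> y \<in> K")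
    case True
    then obtain y where y: "leaf E y u" "y \<in> K" using star(4) by blast
    then show ?thesis
      using forced_leaf_lift[OF y v0 IH[OF forced_leaf_reduction[OF y]]] in_Vs[OF y(1)] v0 by blast
  next
    case False
    then have in_J: "y \<in> J" if "{y, u} \<in> E" "y \<noteq> w" for y
      using that star(4) leaf_sides K_J by blast
    have l: "l \<in> J" "l \<noteq> v0"
      using in_J[OF leaf_edge[OF star(1)] star(2)] star(4)[OF leaf_edge[OF star(1)] star(2)] by auto
    show ?thesis
    proof (cases "\<exists>y. {y, u} \<in> E \<and> y \<noteq> w \<and> y \<noteq> l")
      case True
      then obtain y where y: "{y, u} \<in> E" "y \<noteq> w" "y \<noteq> l" by blast
      then have "leaf E y u" "y \<noteq> v0" "y \<in> J" using star(4) in_J by auto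
      then show ?thesis
        using parallel_leaves_lift[OF star(1) \<open>leaf E y u\<close> y(3)[symmetric] l(1) \<open>y \<in> J\<close> v0
            l(2)[symmetric] \<open>y \<noteq> v0\<close>[symmetric]]
          IH[OF parallel_leaves_reduction[OF star(1) \<open>leaf E y u\<close> y(3)[symmetric] l(1) \<open>y \<in> J\<close> star(3)
              star(2)[symmetric] y(2)[symmetric]]]
          in_Vs[OF star(1)] v0 l(2) by blast
    next
      case False
      then have only: "\<And>y. {y, u} \<in> E \<Longrightarrow> y = w \<or> y = l" by blast
      show ?thesis
        using series_lift[OF star(1) l(1) star(3) star(2)[symmetric] only v0 l(2)[symmetric]]
          IH[OF series_reduction[OF star(1) l(1) star(3) star(2)[symmetric] only]]
          in_Vs[OF star(1)] v0 l(2) by blast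
    qed
  qed
qed

theorem weighted_forest_has_balanced_potential:
  assumes "weighted_forest Vs E V U K J D a" "v0 \<in> J"
  shows "has_balanced_potential D E V U K J a v0"
  using assms
proof (induction "card Vs" arbitrary: Vs E V U K J a rule: less_induct)
  case less
  interpret weighted_forest Vs E V U K J D a by (rule less.prems(1))
  have IH: "has_balanced_potential D E' V' U' K' J' a' v0"
    if "weighted_forest Vs' E' V' U' K' J' D a'" "Vs' \<subset> Vs" "v0 \<in> J'" for Vs' E' V' U' K' J' a'
    using less.hyps psubset_card_mono[OF finite(1)] that by blast
  have v0: "v0 \<in> J" "v0 \<in> V" "v0 \<in> Vs" using less.prems(2) K_J V_U by auto
  show ?case
  proof (cases "\<exists>e\<in>E. v0 \<in> e")
    case False
    then show ?thesis using isolated_has_balanced_potential v0(1) by blast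
  next
    case True
    then obtain z where z: "{v0, z} \<in> E" using simple_graph_edge_through[OF simple] by metis
    show ?thesis
    proof (cases rule: leaf_star_exists[OF simple acyclic v0(3) z])
      case (1 l)
      then show ?thesis using leaf_sides v0(2) V_U(2) by blast
    next
      case (2 l u w)
      then show ?thesis using leaf_star_step[OF v0(1) 2(1,2,4,5)] IH by blast
    qed
  qed
qed

lemma valid_tree_weighted_forest:
  assumes "1 \<le> k" and tree: "valid_tree k Vs E r" and "signed_incidence Vs E r D"
    and "K \<union> J = even_verts Vs E r" "K \<inter> J = {}"
    and "0 < matching_sum E (K \<union> odd_verts Vs E r) J (\<lambda>_. 1) {}"
  shows "weighted_forest Vs E (even_verts Vs E r) (odd_verts Vs E r) K J D (\<lambda>_. 1)"
proof
  have is_tree: "is_tree Vs E" and "r \<in> Vs" using tree by (auto simp: valid_tree_def)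
  then have simple: "simple_graph Vs E" by (simp add: is_tree_def)
  show "simple_graph Vs E" by (rule simple)
  show "\<not> has_cycle E" using is_tree by (simp add: is_tree_def)
  show "\<exists>v\<in>even_verts Vs E r. \<exists>u\<in>odd_verts Vs E r. e = {v, u}" if e: "e \<in> E" for e
  proof -
    obtain x y where xy: "x \<in> Vs" "y \<in> Vs" "e = {x, y}"
      using e simple unfolding simple_graph_def by blast
    then have "even (gdist E r x) \<longleftrightarrow> odd (gdist E r y)"
      using tree_gdist_edge_parity[OF is_tree \<open>r \<in> Vs\<close>, of x y] e by simp
    then show ?thesis
      using xy unfolding even_verts_def odd_verts_def by (cases "even (gdist E r x)") (auto simp: insert_commute)
  qed
  show "2 \<le> degree E u" if "u \<in> odd_verts Vs E r" for u
    using that tree \<open>1 \<le> k\<close> by (simp add: valid_tree_def)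
  show "even_verts Vs E r \<union> odd_verts Vs E r = Vs" "even_verts Vs E r \<inter> odd_verts Vs E r = {}"
    unfolding even_verts_def odd_verts_def by auto
  show "if {v, u} \<in> E then D v u = 1 \<or> D v u = -1 else D v u = 0"
    if "v \<in> even_verts Vs E r" "u \<in> odd_verts Vs E r" for v u
    using assms(3) that unfolding signed_incidence_def by blast
qed (use assms(4-6) in simp_all)

theorem claim2p11:
  fixes k :: nat and Vs :: "'a set" and E :: "'a set set" and r :: 'a
    and D :: "'a \<Rightarrow> 'a \<Rightarrow> real" and K J :: "'a set" and v0 :: 'a
  assumes "k \<ge> 1"
    and "valid_tree k Vs E r"
    and "signed_incidence Vs E r D"
    and "K \<union> J = even_verts Vs E r" and "K \<inter> J = {}"
    and "mcount Vs E r K > 0"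
    and "v0 \<in> J"
  shows "\<exists>\<phi> :: 'a \<Rightarrow> real.
           (\<forall>u\<in>odd_verts Vs E r. (\<Sum>v\<in>even_verts Vs E r. \<phi> v * D v u) = 0) \<and>
           \<phi> v0 = 1 \<and>
           (\<Sum>v\<in>J. (\<phi> v)\<^sup>2) = real (mcount Vs E r K) /
              (real (mcount Vs E r K) - real (mcount Vs E r (insert v0 K)))"
proof -
  define S where "S = K \<union> odd_verts Vs E r"
  have count: "real (mcount Vs E r K') = matching_sum E (K' \<union> odd_verts Vs E r) J (\<lambda>_. 1) {}" for K'
    unfolding mcount_def matching_sum_def matchings_def by simp
  have forest: "weighted_forest Vs E (even_verts Vs E r) (odd_verts Vs E r) K J D (\<lambda>_. 1)"
    by (rule valid_tree_weighted_forest[OF assms(1-5)]) (use assms(6) count[of K] in simp)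
  have "v0 \<notin> S" using assms(4,5,7) unfolding S_def even_verts_def odd_verts_def by auto
  then have "matching_sum E S J (\<lambda>_. 1) {v0} = real (mcount Vs E r K) - real (mcount Vs E r (insert v0 K))"
    using matching_sum_split[OF weighted_forest.finite(2)[OF forest], of v0 S J "\<lambda>_. 1" "{}"]
    unfolding count S_def by simp
  then show ?thesis
    using weighted_forest_has_balanced_potential[OF forest assms(7)] count[of K]
    unfolding has_balanced_potential_def balanced_def energy_def S_def by auto
qed

end
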